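(* Let $(X,\mathcal L,d)$ be a reduced Birkhoff--Beatley system whose vertical extension is drop complete, let $D\subseteq X$ be a nonempty convex set, and let $f,g\colon D\to\mathbb R$. Suppose that for all $n\in\mathbb N$ ($n\ge1$), all $x_0,x_1,\dots,x_n\in D$, all $x\in\operatorname{conv}\{x_1,\dots,x_n\}$ and all $t\in[0,1]$, $$f(c(t))\le(1-t)g(x_0)+t f(x),$$ where $c\colon[0,1]\to D$ is the standard parametrization of the segment $[x_0,x]$ (so $c(0)=x_0$, $c(1)=x$). Then there exists a segment convex function $\phi\colon D\to\mathbb R$ with $f\le\phi\le g$ on $D$.
   Context: A reduced Birkhoff--Beatley system is a triple $(X,\mathcal L,d)$ where $X$ is a set with at least two elements, $\mathcal L$ is a family of subsets of $X$ (lines), and $d\colon X^2\to\mathbb R$ is a function, such that: (i) any two distinct points lie in a unique line of $\mathcal L$; (ii) for each $\ell\in\mathcal L$ there is a bijection $c\colon\mathbb R\to\ell$ (a ruler) with $d(c(t),c(s))=|t-s|$. For $a,b,t\in X$, write $(atb)$ if $a,t,b$ are three distinct collinear points with $d(a,b)=d(a,t)+d(t,b)$. The segment $[a,b]$ is $\{a\}$ if $a=b$, and $\{t\mid (atb)\}\cup\{a,b\}$ otherwise. If $a\ne b$, $\ell$ is the line through them and $c$ a ruler for $\ell$ with $c(\alpha)=a$, $c(\beta)=b$, the standard parametrization of $[a,b]$ is $\tilde c\colon[0,1]\to[a,b]$, $\tilde c(t)=c((\beta-\alpha)t+\alpha)$; if $a=b$ it is the constant map $a$. A set $K$ is convex if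 $[a,b]\subseteq K$ for all $a,b\in K$; $\operatorname{conv}(H)$ is the intersection of all convex sets containing $H$. For a nonempty convex $D$, a function $\phi\colon D\to\mathbb R$ is segment convex if $\phi(c(t))\le(1-t)\phi(x_0)+t\phi(x_1)$ for all $x_0,x_1\in D$, $t\in[0,1]$, where $c$ is the standard parametrization of $[x_0,x_1]$. The system is drop complete if for every convex $K\subseteq X$ and every $x_0\in X$, $\operatorname{conv}(\{x_0\}\cup K)=\bigcup\{[x_0,x]\mid x\in K\}$. The vertical extension is $(X^*,\mathcal L^*,d^* )$ with $X^*=X\times\mathbb R$, $d^*((x_0,y_0),(x_1,y_1))=\sqrt{d(x_0,x_1)^2+(y_0-y_1)^2}$, and lines: for $(x_0,y_0)\ne(x_1,y_1)$ with $x_0\ne x_1$, taking a ruler $c$ of the line through $x_0,x_1$ with $c(s_0)=x_0,c(s_1)=x_1$ and $a=((s_0-s_1)^2+(y_0-y_1)^2)^{-1/2}$, the line $\{(c(at(s_1-s_0)+s_0),\,at(y_1-y_0)+y_0)\mid t\in\mathbb R\}$; for $x_0=x_1$, the line $\{x_0\}\times\mathbb R$. (It is itself a reduced Birkhoff--Beatley system, so segments, convexity and drop completeness make sense in it.) *)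

theory Defs
  imports Main "HOL-Library.FuncSet" Complex_Main
begin

definition ruler :: "('a \<Rightarrow> 'a \<Rightarrow> real) \<Rightarrow> 'a set \<Rightarrow> (real \<Rightarrow> 'a) \<Rightarrow> bool" where
  "ruler d l c \<longleftrightarrow> bij_betw c UNIV l \<and> (\<forall>t s. d (c t) (c s) = \<bar>t - s\<bar>)"

definition rBB :: "'a set \<Rightarrow> 'a set set \<Rightarrow> ('a \<Rightarrow> 'a \<Rightarrow> real) \<Rightarrow> bool" where
  "rBB X L d \<longleftrightarrow>
     (\<exists>a\<in>X. \<exists>b\<in>X. a \<noteq> b) \<and>
     (\<forall>l\<in>L. l \<subseteq> X) \<and>
     (\<forall>a\<in>X. \<forall>b\<in>X. a \<noteq> b \<longrightarrow> (\<exists>!l. l \<in> L \<and> a \<in> l \<and> b \<in> l)) \<and>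
     (\<forall>l\<in>L. \<exists>c. ruler d l c)"

definition betw :: "'a set set \<Rightarrow> ('a \<Rightarrow> 'a \<Rightarrow> real) \<Rightarrow> 'a \<Rightarrow> 'a \<Rightarrow> 'a \<Rightarrow> bool" where
  "betw L d a t b \<longleftrightarrow> a \<noteq> t \<and> t \<noteq> b \<and> a \<noteq> b \<and>
     (\<exists>l\<in>L. a \<in> l \<and> t \<in> l \<and> b \<in> l) \<and> d a b = d a t + d t b"

definition seg :: "'a set set \<Rightarrow> ('a \<Rightarrow> 'a \<Rightarrow> real) \<Rightarrow> 'a \<Rightarrow> 'a \<Rightarrow> 'a set" where
  "seg L d a b = (if a = b then {a} else {t. betw L d a t b} \<union> {a, b})"

definition bb_convex :: "'a set set \<Rightarrow> ('a \<Rightarrow> 'a \<Rightarrow> real) \<Rightarrow> 'a set \<Rightarrow> bool" where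
  "bb_convex L d K \<longleftrightarrow> (\<forall>a\<in>K. \<forall>b\<in>K. seg L d a b \<subseteq> K)"

definition bb_conv :: "'a set \<Rightarrow> 'a set set \<Rightarrow> ('a \<Rightarrow> 'a \<Rightarrow> real) \<Rightarrow> 'a set \<Rightarrow> 'a set" where
  "bb_conv X L d H = \<Inter>{K. K \<subseteq> X \<and> bb_convex L d K \<and> H \<subseteq> K}"

text \<open>Standard parametrization of the segment from a to b (a choice of ruler is made;
  the result does not depend on it).\<close>
definition std_param :: "'a set set \<Rightarrow> ('a \<Rightarrow> 'a \<Rightarrow> real) \<Rightarrow> 'a \<Rightarrow> 'a \<Rightarrow> real \<Rightarrow> 'a" where
  "std_param L d a b t =
     (if a = b then a else
      (let l = (THE l. l \<in> L \<and> a \<in> l \<and> b \<in> l);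
           c = (SOME c. ruler d l c);
           \<alpha> = (SOME \<alpha>. c \<alpha> = a);
           \<beta> = (SOME \<beta>. c \<beta> = b)
       in c ((\<beta> - \<alpha>) * t + \<alpha>)))"

definition seg_convex_fun ::
  "'a set set \<Rightarrow> ('a \<Rightarrow> 'a \<Rightarrow> real) \<Rightarrow> 'a set \<Rightarrow> ('a \<Rightarrow> real) \<Rightarrow> bool" where
  "seg_convex_fun L d D \<phi> \<longleftrightarrow>
     (\<forall>x0\<in>D. \<forall>x1\<in>D. \<forall>t\<in>{0..1::real}.
        \<phi> (std_param L d x0 x1 t) \<le> (1 - t) * \<phi> x0 + t * \<phi> x1)"

text \<open>Drop completeness (for nonempty convex K; for K empty the identity fails trivially).\<close>
definition drop_complete :: "'a set \<Rightarrow> 'a set set \<Rightarrow> ('a \<Rightarrow> 'a \<Rightarrow> real) \<Rightarrow> bool" where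
  "drop_complete X L d \<longleftrightarrow>
     (\<forall>K x0. K \<subseteq> X \<and> K \<noteq> {} \<and> bb_convex L d K \<and> x0 \<in> X \<longrightarrow>
        bb_conv X L d (insert x0 K) = (\<Union>x\<in>K. seg L d x0 x))"

definition vert_dist :: "('a \<Rightarrow> 'a \<Rightarrow> real) \<Rightarrow> ('a \<times> real) \<Rightarrow> ('a \<times> real) \<Rightarrow> real" where
  "vert_dist d p q = sqrt ((d (fst p) (fst q))\<^sup>2 + (snd p - snd q)\<^sup>2)"

definition vert_lines :: "'a set \<Rightarrow> 'a set set \<Rightarrow> ('a \<Rightarrow> 'a \<Rightarrow> real) \<Rightarrow> ('a \<times> real) set set" where
  "vert_lines X L d = {S. \<exists>x0 y0 x1 y1. x0 \<in> X \<and> x1 \<in> X \<and> (x0, y0) \<noteq> (x1, y1) \<and>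
     ((x0 \<noteq> x1 \<and> (\<exists>l c s0 s1. l \<in> L \<and> x0 \<in> l \<and> x1 \<in> l \<and> ruler d l c \<and>
          c s0 = x0 \<and> c s1 = x1 \<and>
          (let a = 1 / sqrt ((s0 - s1)\<^sup>2 + (y0 - y1)\<^sup>2) in
           S = (\<lambda>t. (c (a * t * (s1 - s0) + s0), a * t * (y1 - y0) + y0)) ` UNIV)))
      \<or> (x0 = x1 \<and> S = {x0} \<times> UNIV))}"

end

theory Submission
  imports Defs "HOL-Analysis.Convex"
begin

text \<open>Work in the vertical extension \<open>X \<times> \<real>\<close>, whose segments are the graphs of linear
  interpolation along segments of \<open>X\<close>, and let \<open>C\<close> be the hull of the epigraph of \<open>g\<close>
  over \<open>D\<close>. By drop completeness the hull of finitely many points is obtained by joining a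
  new point to the hull of the others, so the case \<open>n = 1\<close> of the hypothesis (a segment from
  a point above \<open>g\<close> to a point above \<open>f\<close> stays above \<open>f\<close>) shows by induction that \<open>C\<close>
  lies above the graph of \<open>f\<close>. The lower envelope of the convex set \<open>C\<close> is segment
  convex, and it lies below \<open>g\<close> because \<open>C\<close> contains the graph of \<open>g\<close>.\<close>

subsection \<open>Rulers\<close>

lemma ruler_in: "ruler d l c \<Longrightarrow> c u \<in> l"
  unfolding ruler_def bij_betw_def by auto

lemma ruler_inj: "ruler d l c \<Longrightarrow> c u = c v \<Longrightarrow> u = v"
  unfolding ruler_def bij_betw_def inj_on_def by auto

lemma ruler_surj: "ruler d l c \<Longrightarrow> z \<in> l \<Longrightarrow> \<exists>u. c u = z"
  unfolding ruler_def bij_betw_def by auto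

lemma ruler_dist: "ruler d l c \<Longrightarrow> d (c u) (c v) = \<bar>u - v\<bar>"
  unfolding ruler_def by auto

lemma ruler_range:
  assumes "\<And>u v. d (P u) (P v) = \<bar>u - v\<bar>"
  shows "ruler d (range P) P"
proof -
  have "inj P"
  proof
    fix u v assume "P u = P v"
    then show "u = v" using assms[of u v] assms[of u u] by simp
  qed
  then show ?thesis unfolding ruler_def bij_betw_def using assms by simp
qed

lemma abs_diff_additive_imp_convex_comb:
  fixes a b q :: real
  assumes "\<bar>a - b\<bar> = \<bar>a - q\<bar> + \<bar>q - b\<bar>"
  obtains t where "t \<in> {0..1}" "q = (b - a) * t + a"
proof (cases "a = b")
  case True
  then show ?thesis using assms that[of 0] by simp
next
  case False
  define t where "t = (q - a) / (b - a)"
  have "q = (b - a) * t + a" unfolding t_def using False by simp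
  moreover have "t \<in> {0..1}"
  proof (cases "a < b")
    case True
    then have "a \<le> q" "q \<le> b" using assms by arith+
    then show ?thesis unfolding t_def using True by (simp add: divide_le_eq_1)
  next
    case False
    then have "b < a" "b \<le> q" "q \<le> a" using \<open>a \<noteq> b\<close> assms by arith+
    then show ?thesis unfolding t_def by (simp add: divide_le_eq_1 zero_le_divide_iff)
  qed
  ultimately show ?thesis using that by blast
qed

lemma ruler_betw_param:
  assumes c: "ruler d l c" and "a \<in> l" "b \<in> l" "z \<in> l" and "d a b = d a z + d z b"
  obtains \<alpha> \<beta> t where "c \<alpha> = a" "c \<beta> = b" "t \<in> {0..1}" "z = c ((\<beta> - \<alpha>) * t + \<alpha>)"
proof -
  obtain \<alpha> \<beta> u where u: "c \<alpha> = a" "c \<beta> = b" "c u = z"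
    using ruler_surj[OF c] assms(2-4) by metis
  then have "\<bar>\<alpha> - \<beta>\<bar> = \<bar>\<alpha> - u\<bar> + \<bar>u - \<beta>\<bar>"
    using assms(5) by (simp add: u[symmetric] ruler_dist[OF c])
  then obtain t where "t \<in> {0..1}" "u = (\<beta> - \<alpha>) * t + \<alpha>"
    by (rule abs_diff_additive_imp_convex_comb)
  then show ?thesis using that u by blast
qed

lemma ruler_param_in_seg:
  assumes "l \<in> L" and c: "ruler d l c" and t: "t \<in> {0..1}"
  shows "c ((\<beta> - \<alpha>) * t + \<alpha>) \<in> seg L d (c \<alpha>) (c \<beta>)"
proof (cases "\<alpha> = \<beta> \<or> t = 0 \<or> t = 1")
  case True
  then show ?thesis by (auto simp: seg_def)
next
  case False
  let ?u = "(\<beta> - \<alpha>) * t + \<alpha>"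
  have t01: "0 < t" "t < 1" using t False by auto
  have diff: "\<alpha> - ?u = t * (\<alpha> - \<beta>)" "?u - \<beta> = (1 - t) * (\<alpha> - \<beta>)"
    by (simp_all add: algebra_simps)
  then have u: "?u \<noteq> \<alpha>" "?u \<noteq> \<beta>"
    using False t01 by (metis diff_self eq_iff_diff_eq_0 mult_eq_0_iff less_irrefl)+
  have "\<bar>\<alpha> - \<beta>\<bar> = \<bar>\<alpha> - ?u\<bar> + \<bar>?u - \<beta>\<bar>"
  proof -
    have "\<bar>\<alpha> - ?u\<bar> + \<bar>?u - \<beta>\<bar> = t * \<bar>\<alpha> - \<beta>\<bar> + (1 - t) * \<bar>\<alpha> - \<beta>\<bar>"
      unfolding diff abs_mult using t01 by simp
    also have "\<dots> = \<bar>\<alpha> - \<beta>\<bar>" by (subst distrib_right[symmetric]) simp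
    finally show ?thesis by (rule sym)
  qed
  then have "d (c \<alpha>) (c \<beta>) = d (c \<alpha>) (c ?u) + d (c ?u) (c \<beta>)"
    unfolding ruler_dist[OF c] .
  moreover have ne: "c \<alpha> \<noteq> c \<beta>" "c \<alpha> \<noteq> c ?u" "c ?u \<noteq> c \<beta>"
    using False u by (metis ruler_inj[OF c])+
  ultimately have "betw L d (c \<alpha>) (c ?u) (c \<beta>)"
    unfolding betw_def using assms(1) ruler_in[OF c] by blast
  then show ?thesis using ne(1) by (simp add: seg_def)
qed

lemma ruler_dist_param:
  assumes c: "ruler d l c"
  shows "d (c \<alpha>) (c ((\<beta> - \<alpha>) * t + \<alpha>)) = \<bar>t\<bar> * d (c \<alpha>) (c \<beta>)"
    and "d (c ((\<beta> - \<alpha>) * t + \<alpha>)) (c \<beta>) = \<bar>1 - t\<bar> * d (c \<alpha>) (c \<beta>)"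
proof -
  have "\<alpha> - ((\<beta> - \<alpha>) * t + \<alpha>) = t * (\<alpha> - \<beta>)"
    and "(\<beta> - \<alpha>) * t + \<alpha> - \<beta> = (1 - t) * (\<alpha> - \<beta>)"
    by (simp_all add: algebra_simps)
  then show "d (c \<alpha>) (c ((\<beta> - \<alpha>) * t + \<alpha>)) = \<bar>t\<bar> * d (c \<alpha>) (c \<beta>)"
    and "d (c ((\<beta> - \<alpha>) * t + \<alpha>)) (c \<beta>) = \<bar>1 - t\<bar> * d (c \<alpha>) (c \<beta>)"
    by (simp_all only: ruler_dist[OF c] abs_mult)
qed

lemma ruler_eq_if_dist_eq:
  assumes c: "ruler d l c" and "a \<in> l" "b \<in> l" "z \<in> l" "z' \<in> l" "a \<noteq> b"
    and "d a z = d a z'" "d z b = d z' b"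
  shows "z = z'"
proof -
  obtain u v w w' where u: "c u = a" "c v = b" "c w = z" "c w' = z'"
    using ruler_surj[OF c] assms(2-5) by metis
  then have "u \<noteq> v" "\<bar>u - w\<bar> = \<bar>u - w'\<bar>" "\<bar>w - v\<bar> = \<bar>w' - v\<bar>"
    using assms(6-8) by (auto simp: u[symmetric] ruler_dist[OF c])
  then have "w = w'" by arith
  then show ?thesis using u by simp
qed

subsection \<open>Reduced Birkhoff--Beatley systems\<close>

lemma rBB_line_subset: "rBB X L d \<Longrightarrow> l \<in> L \<Longrightarrow> l \<subseteq> X"
  unfolding rBB_def by auto

lemma rBB_line_unique:
  assumes "rBB X L d" "a \<noteq> b" "l \<in> L" "a \<in> l" "b \<in> l" "l' \<in> L" "a \<in> l'" "b \<in> l'"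
  shows "l = l'"
proof -
  have "a \<in> X" "b \<in> X" using rBB_line_subset[OF assms(1,3)] assms(4,5) by auto
  then have "\<exists>!l. l \<in> L \<and> a \<in> l \<and> b \<in> l" using assms(1,2) unfolding rBB_def by blast
  then show ?thesis using assms(3-8) by blast
qed

lemma rBB_ruler_through:
  assumes r: "rBB X L d" and "x0 \<in> X" "x1 \<in> X"
  obtains l c \<alpha> \<beta> where "l \<in> L" "ruler d l c" "c \<alpha> = x0" "c \<beta> = x1"
proof -
  obtain y where y: "y \<in> X" "y \<noteq> x0"
    using r unfolding rBB_def by metis
  define w where "w = (if x1 = x0 then y else x1)"
  have "w \<in> X" "w \<noteq> x0" "x1 \<in> {x0, w}" using y assms(3) unfolding w_def by auto
  then obtain l where l: "l \<in> L" "x0 \<in> l" "x1 \<in> l"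
    using r assms(2) unfolding rBB_def by blast
  obtain c where c: "ruler d l c" using r l(1) unfolding rBB_def by blast
  obtain \<alpha> \<beta> where "c \<alpha> = x0" "c \<beta> = x1" using ruler_surj[OF c] l by metis
  then show ?thesis using that l(1) c by blast
qed

lemma rBB_dist_self:
  assumes "rBB X L d" "x \<in> X"
  shows "d x x = 0"
proof -
  obtain l c \<alpha> \<beta> where "ruler d l c" "c \<alpha> = x"
    using rBB_ruler_through[OF assms(1,2,2)] by metis
  then show ?thesis using ruler_dist[of d l c \<alpha> \<alpha>] by simp
qed

lemma seg_subset:
  assumes "rBB X L d" "a \<in> X" "b \<in> X"
  shows "seg L d a b \<subseteq> X"
  using assms rBB_line_subset[OF assms(1)] unfolding seg_def betw_def by auto

lemma std_param_same [simp]: "std_param L d x x t = x"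
  unfolding std_param_def by simp

lemma std_param_ruler:
  assumes r: "rBB X L d" and l: "l \<in> L" and c: "ruler d l c"
  shows "std_param L d (c \<alpha>) (c \<beta>) t = c ((\<beta> - \<alpha>) * t + \<alpha>)"
proof (cases "c \<alpha> = c \<beta>")
  case True
  then show ?thesis using ruler_inj[OF c True] by simp
next
  case False
  have the_l: "(THE l. l \<in> L \<and> c \<alpha> \<in> l \<and> c \<beta> \<in> l) = l"
    using rBB_line_unique[OF r False] l ruler_in[OF c] by (intro the_equality) auto
  define c' where "c' = (SOME c. ruler d l c)"
  have c': "ruler d l c'"
  proof -
    have "\<exists>c. ruler d l c" using r l unfolding rBB_def by blast
    then show ?thesis unfolding c'_def by (rule someI_ex)
  qed
  define \<alpha>' where "\<alpha>' = (SOME \<alpha>'. c' \<alpha>' = c \<alpha>)"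
  define \<beta>' where "\<beta>' = (SOME \<beta>'. c' \<beta>' = c \<beta>)"
  have \<alpha>': "c' \<alpha>' = c \<alpha>" and \<beta>': "c' \<beta>' = c \<beta>"
    unfolding \<alpha>'_def \<beta>'_def by (rule someI_ex, rule ruler_surj[OF c' ruler_in[OF c]])+
  have "std_param L d (c \<alpha>) (c \<beta>) t = c' ((\<beta>' - \<alpha>') * t + \<alpha>')"
    using False unfolding std_param_def Let_def the_l c'_def \<alpha>'_def \<beta>'_def by simp
  also have "\<dots> = c ((\<beta> - \<alpha>) * t + \<alpha>)"
    using ruler_dist_param[OF c, where \<alpha>=\<alpha> and \<beta>=\<beta> and t=t]
      ruler_dist_param[OF c', where \<alpha>=\<alpha>' and \<beta>=\<beta>' and t=t] unfolding \<alpha>' \<beta>'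
    by (intro ruler_eq_if_dist_eq[OF c ruler_in[OF c] ruler_in[OF c] ruler_in[OF c'] ruler_in[OF c] False])
      simp_all
  finally show ?thesis .
qed

lemma std_param_in_seg:
  assumes r: "rBB X L d" and "x0 \<in> X" "x1 \<in> X" and t: "t \<in> {0..1}"
  shows "std_param L d x0 x1 t \<in> seg L d x0 x1"
proof -
  obtain l c \<alpha> \<beta> where l: "l \<in> L" and c: "ruler d l c" and "c \<alpha> = x0" "c \<beta> = x1"
    using rBB_ruler_through[OF assms(1-3)] by metis
  then show ?thesis using ruler_param_in_seg[OF l c t] std_param_ruler[OF r l c] by metis
qed

lemma std_param_0_1:
  assumes r: "rBB X L d" and "x0 \<in> X" "x1 \<in> X"
  shows "std_param L d x0 x1 0 = x0" and "std_param L d x0 x1 1 = x1"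
proof -
  obtain l c \<alpha> \<beta> where l: "l \<in> L" and c: "ruler d l c" and "c \<alpha> = x0" "c \<beta> = x1"
    using rBB_ruler_through[OF assms(1-3)] by metis
  then show "std_param L d x0 x1 0 = x0" "std_param L d x0 x1 1 = x1"
    using std_param_ruler[OF r l c] by auto
qed

subsection \<open>The vertical extension\<close>

lemma vert_dist_ruler_param:
  assumes c: "ruler d l c" and AB: "A\<^sup>2 + B\<^sup>2 = 1"
  shows "vert_dist d (c (A * \<tau> + s0), B * \<tau> + b0) (c (A * \<sigma> + s0), B * \<sigma> + b0) = \<bar>\<tau> - \<sigma>\<bar>"
proof -
  have "(A * \<tau> + s0 - (A * \<sigma> + s0))\<^sup>2 + (B * \<tau> + b0 - (B * \<sigma> + b0))\<^sup>2 = (A\<^sup>2 + B\<^sup>2) * (\<tau> - \<sigma>)\<^sup>2"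
    by (simp add: power2_eq_square algebra_simps)
  then show ?thesis unfolding vert_dist_def using AB by (simp add: ruler_dist[OF c])
qed

lemma vert_lines_direction:
  fixes s0 s1 y0 y1 :: real
  assumes "(s0, y0) \<noteq> (s1, y1)"
  defines "a \<equiv> 1 / sqrt ((s0 - s1)\<^sup>2 + (y0 - y1)\<^sup>2)"
  shows "a > 0" and "(a * (s1 - s0))\<^sup>2 + (a * (y1 - y0))\<^sup>2 = 1"
proof -
  let ?R = "(s0 - s1)\<^sup>2 + (y0 - y1)\<^sup>2"
  have R: "?R > 0" using assms(1) by (simp add: sum_power2_gt_zero_iff)
  then show "a > 0" unfolding a_def by simp
  have "(a * (s1 - s0))\<^sup>2 + (a * (y1 - y0))\<^sup>2 = ((s1 - s0)\<^sup>2 + (y1 - y0)\<^sup>2) / ?R"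
    using R unfolding a_def by (simp add: power_mult_distrib power_divide add_divide_distrib)
  also have "\<dots> = 1" using R assms(1) by (simp add: power2_commute)
  finally show "(a * (s1 - s0))\<^sup>2 + (a * (y1 - y0))\<^sup>2 = 1" .
qed

lemma vert_line_param:
  assumes r: "rBB X L d" and S: "S \<in> vert_lines X L d"
  obtains l c A B s0 b0 where "l \<in> L" "ruler d l c" "A\<^sup>2 + B\<^sup>2 = 1"
    "S = range (\<lambda>\<tau>. (c (A * \<tau> + s0), B * \<tau> + b0))"
proof -
  obtain x0 y0 x1 y1 where "x0 \<in> X \<and> x1 \<in> X \<and> (x0, y0) \<noteq> (x1, y1) \<and>
     ((x0 \<noteq> x1 \<and> (\<exists>l c s0 s1. l \<in> L \<and> x0 \<in> l \<and> x1 \<in> l \<and> ruler d l c \<and>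
          c s0 = x0 \<and> c s1 = x1 \<and>
          (let a = 1 / sqrt ((s0 - s1)\<^sup>2 + (y0 - y1)\<^sup>2) in
           S = (\<lambda>t. (c (a * t * (s1 - s0) + s0), a * t * (y1 - y0) + y0)) ` UNIV)))
      \<or> (x0 = x1 \<and> S = {x0} \<times> UNIV))"
    using S unfolding vert_lines_def mem_Collect_eq by (elim exE) (rule that)
  then show ?thesis
  proof (elim conjE disjE exE)
    fix l c s0 s1
    assume "x0 \<noteq> x1" and l: "l \<in> L" and c: "ruler d l c" and cs: "c s0 = x0" "c s1 = x1"
      and S_def: "let a = 1 / sqrt ((s0 - s1)\<^sup>2 + (y0 - y1)\<^sup>2) in
           S = (\<lambda>t. (c (a * t * (s1 - s0) + s0), a * t * (y1 - y0) + y0)) ` UNIV"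
    define a where "a = 1 / sqrt ((s0 - s1)\<^sup>2 + (y0 - y1)\<^sup>2)"
    have S': "S = range (\<lambda>\<tau>. (c (a * (s1 - s0) * \<tau> + s0), a * (y1 - y0) * \<tau> + y0))"
      using S_def unfolding Let_def a_def[symmetric] by (simp add: algebra_simps)
    have "(s0, y0) \<noteq> (s1, y1)" using \<open>x0 \<noteq> x1\<close> cs by auto
    then have "(a * (s1 - s0))\<^sup>2 + (a * (y1 - y0))\<^sup>2 = 1"
      unfolding a_def by (rule vert_lines_direction(2))
    then show ?thesis using S' by (rule that[OF l c])
  next
    assume x0: "x0 \<in> X" and S: "S = {x0} \<times> UNIV"
    obtain l c \<alpha> where l: "l \<in> L" and c: "ruler d l c" and "c \<alpha> = x0"
      using rBB_ruler_through[OF r x0 x0] by metis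
    then have "S = range (\<lambda>\<tau>. (c (0 * \<tau> + \<alpha>), 1 * \<tau> + 0))" unfolding S by auto
    then show ?thesis using that[OF l c, of 0 1 \<alpha> 0] by simp
  qed
qed

lemma vert_line_through:
  assumes r: "rBB X L d" and x0: "x0 \<in> X" and x1: "x1 \<in> X" and ne: "(x0, y0) \<noteq> (x1, y1)"
  obtains P \<alpha> \<beta> where "range P \<in> vert_lines X L d" "\<And>\<tau> \<sigma>. vert_dist d (P \<tau>) (P \<sigma>) = \<bar>\<tau> - \<sigma>\<bar>"
    "P \<alpha> = (x0, y0)" "P \<beta> = (x1, y1)"
    "\<And>t. P ((\<beta> - \<alpha>) * t + \<alpha>) = (std_param L d x0 x1 t, (1 - t) * y0 + t * y1)"
proof (cases "x0 = x1")
  case True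
  define P where "P = (\<lambda>\<tau>::real. (x0, \<tau>))"
  have "range P \<in> vert_lines X L d"
    unfolding vert_lines_def P_def using x0 ne True by blast
  moreover have "vert_dist d (P \<tau>) (P \<sigma>) = \<bar>\<tau> - \<sigma>\<bar>" for \<tau> \<sigma>
    unfolding P_def vert_dist_def by (simp add: rBB_dist_self[OF r x0])
  moreover have "P ((y1 - y0) * t + y0) = (std_param L d x0 x1 t, (1 - t) * y0 + t * y1)" for t
    unfolding P_def using True by (simp add: algebra_simps)
  ultimately show ?thesis using that[of P y0 y1] True unfolding P_def by simp
next
  case False
  obtain l c s0 s1 where l: "l \<in> L" and c: "ruler d l c" and cs: "c s0 = x0" "c s1 = x1"
    using rBB_ruler_through[OF r x0 x1] by metis
  have sy: "(s0, y0) \<noteq> (s1, y1)" using False cs by auto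
  define a where "a = 1 / sqrt ((s0 - s1)\<^sup>2 + (y0 - y1)\<^sup>2)"
  define P where "P = (\<lambda>\<tau>. (c (a * (s1 - s0) * \<tau> + s0), a * (y1 - y0) * \<tau> + y0))"
  have "range P = (\<lambda>t. (c (a * t * (s1 - s0) + s0), a * t * (y1 - y0) + y0)) ` UNIV"
    unfolding P_def by (simp add: algebra_simps)
  then have "range P \<in> vert_lines X L d"
    unfolding vert_lines_def Let_def a_def using x0 x1 False l c cs ruler_in[OF c] by blast
  moreover have "vert_dist d (P \<tau>) (P \<sigma>) = \<bar>\<tau> - \<sigma>\<bar>" for \<tau> \<sigma>
    unfolding P_def using vert_dist_ruler_param[OF c vert_lines_direction(2)[OF sy]] a_def by simp
  moreover have "P ((1 / a - 0) * t + 0) = (std_param L d x0 x1 t, (1 - t) * y0 + t * y1)" for t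
    using vert_lines_direction(1)[OF sy] unfolding P_def a_def[symmetric]
    by (simp add: cs[symmetric] std_param_ruler[OF r l c] algebra_simps)
  moreover have "P 0 = (x0, y0)" "P (1 / a) = (x1, y1)"
    using vert_lines_direction(1)[OF sy] unfolding P_def a_def[symmetric] by (simp_all add: cs)
  ultimately show ?thesis using that by blast
qed

lemma vert_seg_eq:
  assumes r: "rBB X L d" and x0: "x0 \<in> X" and x1: "x1 \<in> X"
  shows "seg (vert_lines X L d) (vert_dist d) (x0, y0) (x1, y1)
    = (\<lambda>t. (std_param L d x0 x1 t, (1 - t) * y0 + t * y1)) ` {0..1}"
    (is "?seg = ?img")
proof
  show "?img \<subseteq> ?seg"
  proof (cases "(x0, y0) = (x1, y1)")
    case True
    then show ?thesis by (auto simp: seg_def algebra_simps)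
  next
    case False
    obtain P \<alpha> \<beta> where S: "range P \<in> vert_lines X L d"
      and P: "\<And>\<tau> \<sigma>. vert_dist d (P \<tau>) (P \<sigma>) = \<bar>\<tau> - \<sigma>\<bar>"
      and ends: "P \<alpha> = (x0, y0)" "P \<beta> = (x1, y1)"
      and param: "\<And>t. P ((\<beta> - \<alpha>) * t + \<alpha>) = (std_param L d x0 x1 t, (1 - t) * y0 + t * y1)"
      using vert_line_through[OF r x0 x1 False] by blast
    show ?thesis
      using ruler_param_in_seg[OF S ruler_range[of "vert_dist d" P, OF P], where \<alpha>=\<alpha> and \<beta>=\<beta>]
      unfolding ends param by auto
  qed
next
  show "?seg \<subseteq> ?img"
  proof
    fix q assume q: "q \<in> ?seg"
    have ends: "(x0, y0) \<in> ?img" "(x1, y1) \<in> ?img"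
      by (rule image_eqI[where x=0] image_eqI[where x=1], simp add: std_param_0_1[OF r x0 x1], simp)+
    show "q \<in> ?img"
    proof (cases "q \<in> {(x0, y0), (x1, y1)}")
      case True
      then show ?thesis using ends by blast
    next
      case False
      then have "betw (vert_lines X L d) (vert_dist d) (x0, y0) q (x1, y1)"
        using q by (simp add: seg_def split: if_splits)
      then obtain S where S: "S \<in> vert_lines X L d" "(x0, y0) \<in> S" "q \<in> S" "(x1, y1) \<in> S"
        and add: "vert_dist d (x0, y0) (x1, y1) = vert_dist d (x0, y0) q + vert_dist d q (x1, y1)"
        unfolding betw_def by blast
      obtain l c A B s0 b0 where l: "l \<in> L" and c: "ruler d l c" and AB: "A\<^sup>2 + B\<^sup>2 = 1"
        and S_eq: "S = range (\<lambda>\<tau>. (c (A * \<tau> + s0), B * \<tau> + b0))"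
        by (rule vert_line_param[OF r S(1)])
      let ?P = "\<lambda>\<tau>. (c (A * \<tau> + s0), B * \<tau> + b0)"
      have "ruler (vert_dist d) S ?P"
        unfolding S_eq by (rule ruler_range) (rule vert_dist_ruler_param[OF c AB])
      then obtain \<alpha> \<beta> t where \<alpha>: "?P \<alpha> = (x0, y0)" and \<beta>: "?P \<beta> = (x1, y1)"
        and t: "t \<in> {0..1}" and q_eq: "q = ?P ((\<beta> - \<alpha>) * t + \<alpha>)"
        using ruler_betw_param[OF _ S(2) S(4) S(3) add] by blast
      have x: "x0 = c (A * \<alpha> + s0)" "x1 = c (A * \<beta> + s0)"
        and y: "y0 = B * \<alpha> + b0" "y1 = B * \<beta> + b0"
        using \<alpha> \<beta> by simp_all
      have "c (A * ((\<beta> - \<alpha>) * t + \<alpha>) + s0)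
          = c (((A * \<beta> + s0) - (A * \<alpha> + s0)) * t + (A * \<alpha> + s0))"
        by (simp add: algebra_simps)
      also have "\<dots> = std_param L d x0 x1 t"
        unfolding x by (rule std_param_ruler[OF r l c, symmetric])
      finally have "fst q = std_param L d x0 x1 t" unfolding q_eq by simp
      moreover have "snd q = (1 - t) * y0 + t * y1"
        unfolding q_eq y by (simp add: algebra_simps)
      ultimately have "q = (std_param L d x0 x1 t, (1 - t) * y0 + t * y1)"
        by (simp add: prod_eq_iff)
      then show ?thesis using t by (rule image_eqI)
    qed
  qed
qed

lemma bb_convex_Times_UNIV:
  assumes r: "rBB X L d"
  shows "bb_convex (vert_lines X L d) (vert_dist d) (X \<times> UNIV)"
  unfolding bb_convex_def
proof (intro ballI)
  fix p q assume "p \<in> X \<times> (UNIV :: real set)" "q \<in> X \<times> (UNIV :: real set)"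
  then obtain x0 y0 x1 y1 where pq: "p = (x0, y0)" "q = (x1, y1)" and x: "x0 \<in> X" "x1 \<in> X"
    by auto
  show "seg (vert_lines X L d) (vert_dist d) p q \<subseteq> X \<times> UNIV"
    unfolding pq vert_seg_eq[OF r x] using std_param_in_seg[OF r x] seg_subset[OF r x] by auto
qed

subsection \<open>Convex hulls\<close>

lemma bb_conv_superset: "H \<subseteq> bb_conv X L d H"
  unfolding bb_conv_def by auto

lemma bb_conv_least: "K \<subseteq> X \<Longrightarrow> bb_convex L d K \<Longrightarrow> H \<subseteq> K \<Longrightarrow> bb_conv X L d H \<subseteq> K"
  unfolding bb_conv_def by auto

lemma bb_conv_mono: "H \<subseteq> H' \<Longrightarrow> bb_conv X L d H \<subseteq> bb_conv X L d H'"
  unfolding bb_conv_def by blast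

lemma bb_convex_bb_conv: "bb_convex L d (bb_conv X L d H)"
  unfolding bb_convex_def bb_conv_def by blast

lemma bb_conv_singleton: "p \<in> X \<Longrightarrow> bb_conv X L d {p} = {p}"
  using bb_conv_superset[of "{p}"] by (intro antisym bb_conv_least) (auto simp: bb_convex_def seg_def)

lemma bb_conv_finite_subset:
  assumes X: "bb_convex L d X" and H: "H \<subseteq> X" and q: "q \<in> bb_conv X L d H"
  obtains F where "finite F" "F \<subseteq> H" "q \<in> bb_conv X L d F"
proof -
  define U where "U = (\<Union>F\<in>{F. finite F \<and> F \<subseteq> H}. bb_conv X L d F)"
  have "U \<subseteq> X"
    unfolding U_def using H by (intro UN_least bb_conv_least[OF subset_refl X]) auto
  moreover have "H \<subseteq> U"
  proof
    fix p assume "p \<in> H"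
    then show "p \<in> U"
      unfolding U_def using bb_conv_superset[of "{p}" X L d] by (intro UN_I[of "{p}"]) auto
  qed
  moreover have "bb_convex L d U"
    unfolding bb_convex_def
  proof (intro ballI)
    fix a b assume "a \<in> U" "b \<in> U"
    then obtain F1 F2 where F: "finite F1" "F1 \<subseteq> H" "a \<in> bb_conv X L d F1"
      "finite F2" "F2 \<subseteq> H" "b \<in> bb_conv X L d F2"
      unfolding U_def by blast
    then have "a \<in> bb_conv X L d (F1 \<union> F2)" "b \<in> bb_conv X L d (F1 \<union> F2)"
      using bb_conv_mono[of _ "F1 \<union> F2"] by blast+
    then have "seg L d a b \<subseteq> bb_conv X L d (F1 \<union> F2)"
      using bb_convex_bb_conv[of L d X "F1 \<union> F2"] unfolding bb_convex_def by blast
    then show "seg L d a b \<subseteq> U" unfolding U_def using F by blast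
  qed
  ultimately have "q \<in> U" using bb_conv_least q by blast
  then show ?thesis unfolding U_def using that by blast
qed

lemma drop_complete_bb_conv_subset:
  assumes dc: "drop_complete X L d" and X: "bb_convex L d X" and EX: "E \<subseteq> X" and EP: "E \<subseteq> P"
    and seg_closed: "\<And>p0 p. p0 \<in> E \<Longrightarrow> p \<in> P \<Longrightarrow> seg L d p0 p \<subseteq> P"
  shows "bb_conv X L d E \<subseteq> P"
proof -
  have finite_case: "bb_conv X L d F \<subseteq> P" if "finite F" "F \<subseteq> E" for F
    using that
  proof (induction F rule: finite_induct)
    case empty
    show ?case using bb_conv_least[of "{}" X L d] by (simp add: bb_convex_def)
  next
    case (insert p0 F)
    then have p0: "p0 \<in> E" "p0 \<in> X" and IH: "bb_conv X L d F \<subseteq> P" using EX by auto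
    show ?case
    proof (cases "F = {}")
      case True
      then show ?thesis using p0 EP bb_conv_singleton[OF p0(2)] by auto
    next
      case False
      let ?K = "bb_conv X L d F"
      have "?K \<subseteq> X" using insert.prems EX by (intro bb_conv_least[OF subset_refl X]) auto
      moreover have "?K \<noteq> {}" using bb_conv_superset[of F X L d] False by blast
      ultimately have "bb_conv X L d (insert p0 ?K) = (\<Union>p\<in>?K. seg L d p0 p)"
        using dc p0(2) bb_convex_bb_conv[of L d X F] by (simp add: drop_complete_def)
      moreover have "bb_conv X L d (insert p0 F) \<subseteq> bb_conv X L d (insert p0 ?K)"
        using bb_conv_superset[of F] by (intro bb_conv_mono) blast
      moreover have "(\<Union>p\<in>?K. seg L d p0 p) \<subseteq> P"
        using IH by (intro UN_least seg_closed[OF p0(1)]) auto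
      ultimately show ?thesis by simp
    qed
  qed
  show ?thesis
  proof
    fix q assume "q \<in> bb_conv X L d E"
    then obtain F where F: "finite F" "F \<subseteq> E" "q \<in> bb_conv X L d F"
      by (rule bb_conv_finite_subset[OF X EX])
    then show "q \<in> P" using finite_case[OF F(1,2)] by blast
  qed
qed

subsection \<open>Segment convex functions from convex sets\<close>

lemma seg_convex_fun_lower_envelope:
  assumes r: "rBB X L d" and D: "D \<subseteq> X"
    and C: "bb_convex (vert_lines X L d) (vert_dist d) C"
    and fibre_ne: "\<And>x. x \<in> D \<Longrightarrow> \<exists>y. (x, y) \<in> C"
    and fibre_bdd: "\<And>x. bdd_below {y. (x, y) \<in> C}"
  shows "seg_convex_fun L d D (\<lambda>x. Inf {y. (x, y) \<in> C})"
  unfolding seg_convex_fun_def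
proof (intro ballI)
  define \<phi> where "\<phi> x = Inf {y. (x, y) \<in> C}" for x
  fix x0 x1 t assume x0: "x0 \<in> D" and x1: "x1 \<in> D" and t: "t \<in> {0..1::real}"
  let ?z = "std_param L d x0 x1 t"
  have chord: "\<phi> ?z \<le> (1 - t) * y0 + t * y1" if "(x0, y0) \<in> C" "(x1, y1) \<in> C" for y0 y1
  proof -
    have "(?z, (1 - t) * y0 + t * y1) \<in> seg (vert_lines X L d) (vert_dist d) (x0, y0) (x1, y1)"
      unfolding vert_seg_eq[OF r D[THEN subsetD, OF x0] D[THEN subsetD, OF x1]] using t by blast
    then have "(?z, (1 - t) * y0 + t * y1) \<in> C" using C that unfolding bb_convex_def by blast
    then show ?thesis unfolding \<phi>_def using fibre_bdd by (intro cInf_lower) auto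
  qed
  have approx: "\<exists>y. (x, y) \<in> C \<and> y < \<phi> x + e" if "x \<in> D" "e > 0" for x e
    using cInf_lessD[of "{y. (x, y) \<in> C}" "\<phi> x + e"] fibre_ne[OF that(1)] that(2)
    unfolding \<phi>_def by auto
  show "\<phi> ?z \<le> (1 - t) * \<phi> x0 + t * \<phi> x1"
  proof (rule field_le_epsilon)
    fix e :: real assume "e > 0"
    then obtain y0 y1 where y0: "(x0, y0) \<in> C" "y0 < \<phi> x0 + e"
      and y1: "(x1, y1) \<in> C" "y1 < \<phi> x1 + e"
      using approx x0 x1 by blast
    have "\<phi> ?z \<le> (1 - t) * y0 + t * y1" by (rule chord[OF y0(1) y1(1)])
    also have "\<dots> \<le> (1 - t) * (\<phi> x0 + e) + t * (\<phi> x1 + e)"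
      using t y0(2) y1(2) by (intro add_mono mult_left_mono) auto
    also have "\<dots> = (1 - t) * \<phi> x0 + t * \<phi> x1 + e" by (simp add: algebra_simps)
    finally show "\<phi> ?z \<le> (1 - t) * \<phi> x0 + t * \<phi> x1 + e" .
  qed
qed

lemma vert_seg_epigraph_subset:
  assumes r: "rBB X L d" and DX: "D \<subseteq> X" and D: "bb_convex L d D"
    and hyp: "\<And>x0 x t. x0 \<in> D \<Longrightarrow> x \<in> D \<Longrightarrow> t \<in> {0..1} \<Longrightarrow>
      f (std_param L d x0 x t) \<le> (1 - t) * g x0 + t * f x"
    and p0: "p0 \<in> epigraph D g" and p: "p \<in> epigraph D f"
  shows "seg (vert_lines X L d) (vert_dist d) p0 p \<subseteq> epigraph D f"
proof -
  obtain x0 y0 x y where p_eq: "p0 = (x0, y0)" "p = (x, y)" by fastforce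
  then have x: "x0 \<in> D" "x \<in> D" and y: "g x0 \<le> y0" "f x \<le> y"
    using p0 p by (simp_all add: mem_epigraph)
  have "(std_param L d x0 x t, (1 - t) * y0 + t * y) \<in> epigraph D f" if t: "t \<in> {0..1}" for t
  proof -
    have "std_param L d x0 x t \<in> D"
      using std_param_in_seg[OF r DX[THEN subsetD, OF x(1)] DX[THEN subsetD, OF x(2)] t] D x
      unfolding bb_convex_def by blast
    moreover have "f (std_param L d x0 x t) \<le> (1 - t) * g x0 + t * f x" by (rule hyp[OF x t])
    moreover have "\<dots> \<le> (1 - t) * y0 + t * y"
      using t y by (intro add_mono mult_left_mono) auto
    ultimately show ?thesis by (simp add: epigraph_def)
  qed
  then show ?thesis
    unfolding p_eq vert_seg_eq[OF r DX[THEN subsetD, OF x(1)] DX[THEN subsetD, OF x(2)]] by blast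
qed

lemma seg_convex_fun_between:
  assumes r: "rBB X L d"
    and dc: "drop_complete (X \<times> UNIV) (vert_lines X L d) (vert_dist d)"
    and DX: "D \<subseteq> X" and D: "bb_convex L d D"
    and hyp: "\<And>x0 x t. x0 \<in> D \<Longrightarrow> x \<in> D \<Longrightarrow> t \<in> {0..1} \<Longrightarrow>
      f (std_param L d x0 x t) \<le> (1 - t) * g x0 + t * f x"
  shows "\<exists>\<phi>. seg_convex_fun L d D \<phi> \<and> (\<forall>x\<in>D. f x \<le> \<phi> x \<and> \<phi> x \<le> g x)"
proof -
  define C where "C = bb_conv (X \<times> UNIV) (vert_lines X L d) (vert_dist d) (epigraph D g)"
  have f_le_g: "f x \<le> g x" if "x \<in> D" for x
    using hyp[OF that that, of 0] by simp
  have "epigraph D g \<subseteq> X \<times> UNIV" "epigraph D g \<subseteq> epigraph D f"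
    using DX f_le_g by (auto simp: epigraph_def intro: order_trans)
  then have C_above_f: "C \<subseteq> epigraph D f"
    unfolding C_def using vert_seg_epigraph_subset[OF r DX D hyp]
    by (intro drop_complete_bb_conv_subset[OF dc bb_convex_Times_UNIV[OF r]])
  have graph_g: "(x, g x) \<in> C" if "x \<in> D" for x
    using that bb_conv_superset unfolding C_def epigraph_def by fastforce
  have fibre_bdd: "bdd_below {y. (x, y) \<in> C}" for x
    using C_above_f by (intro bdd_belowI[of _ "f x"]) (auto simp: epigraph_def)
  define \<phi> where "\<phi> x = Inf {y. (x, y) \<in> C}" for x
  have "bb_convex (vert_lines X L d) (vert_dist d) C"
    unfolding C_def by (rule bb_convex_bb_conv)
  then have "seg_convex_fun L d D \<phi>"
    unfolding \<phi>_def using graph_g by (intro seg_convex_fun_lower_envelope[OF r DX _ _ fibre_bdd]) blast+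
  moreover have "f x \<le> \<phi> x \<and> \<phi> x \<le> g x" if "x \<in> D" for x
    unfolding \<phi>_def using graph_g[OF that] C_above_f fibre_bdd
    by (auto intro!: cInf_greatest cInf_lower simp: epigraph_def)
  ultimately show ?thesis by blast
qed

theorem theorem1:
  fixes X :: "'a set" and L :: "'a set set" and d :: "'a \<Rightarrow> 'a \<Rightarrow> real"
    and D :: "'a set" and f g :: "'a \<Rightarrow> real"
  assumes "rBB X L d"
    and "drop_complete (X \<times> (UNIV :: real set)) (vert_lines X L d) (vert_dist d)"
    and "D \<subseteq> X" and "D \<noteq> {}" and "bb_convex L d D"
    and "\<forall>n::nat. n \<ge> 1 \<longrightarrow> (\<forall>xs :: nat \<Rightarrow> 'a. (\<forall>i\<le>n. xs i \<in> D) \<longrightarrow>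
           (\<forall>x \<in> bb_conv X L d (xs ` {1..n}). \<forall>t\<in>{0..1::real}.
              f (std_param L d (xs 0) x t) \<le> (1 - t) * g (xs 0) + t * f x))"
  shows "\<exists>\<phi>. seg_convex_fun L d D \<phi> \<and> (\<forall>x\<in>D. f x \<le> \<phi> x \<and> \<phi> x \<le> g x)"
proof (rule seg_convex_fun_between[OF assms(1-3,5)])
  fix x0 x t assume "x0 \<in> D" "x \<in> D" "t \<in> {0..1::real}"
  moreover define xs where "xs = (\<lambda>i::nat. if i = 0 then x0 else x)"
  moreover have "x \<in> bb_conv X L d (xs ` {1..1})"
    using bb_conv_superset[of "{x}"] unfolding xs_def by simp
  ultimately show "f (std_param L d x0 x t) \<le> (1 - t) * g x0 + t * f x"
    using assms(6)[rule_format, of 1 xs] unfolding xs_def by auto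
qed

end
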